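(* Let $G$ be a graph on $[n]$. If $G$ is 2-connected and crossing closed, then $G$ is tightly closed.
   Context: Graphs are finite simple graphs with vertex set $[n]$; edges are written $ij$ with $i<j$. Two edges $a_1a_2$ and $b_1b_2$ cross if $a_1<b_1<a_2<b_2$ or $b_1<a_1<b_2<a_2$. Two crossing edges $e,f$ are crossing closed if among all induced connected subgraphs of $G$ containing $e$ and $f$ there is a unique minimal one under containment, denoted $J(e,f)$; $G$ is crossing closed if all pairs of crossing edges are. $G$ is tightly closed if it is crossing closed and for all crossing edges $e,f$, $J(e,f)$ is a subgraph of $K_4$ (i.e. has exactly the four endpoints of $e$ and $f$ as vertices). *)

theory Defs
  imports Main
begin

definition graph_on :: "nat \<Rightarrow> (nat \<times> nat) set \<Rightarrow> bool" where
  "graph_on n E \<longleftrightarrow> (\<forall>(i,j)\<in>E. 1 \<le> i \<and> i < j \<and> j \<le> n)"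

definition adj :: "(nat \<times> nat) set \<Rightarrow> nat \<Rightarrow> nat \<Rightarrow> bool" where
  "adj E u v \<longleftrightarrow> (u,v) \<in> E \<or> (v,u) \<in> E"

definition connected_on :: "(nat \<times> nat) set \<Rightarrow> nat set \<Rightarrow> bool" where
  "connected_on E S \<longleftrightarrow> S \<noteq> {} \<and>
     (\<forall>u\<in>S. \<forall>v\<in>S. (u,v) \<in> {(x,y). x \<in> S \<and> y \<in> S \<and> adj E x y}\<^sup>*)"

definition two_connected :: "nat \<Rightarrow> (nat \<times> nat) set \<Rightarrow> bool" where
  "two_connected n E \<longleftrightarrow> n \<ge> 3 \<and> connected_on E {1..n} \<and>
     (\<forall>v\<in>{1..n}. connected_on E ({1..n} - {v}))"

definition crossing :: "nat \<times> nat \<Rightarrow> nat \<times> nat \<Rightarrow> bool" where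
  "crossing e f \<longleftrightarrow> (case e of (a1,a2) \<Rightarrow> case f of (b1,b2) \<Rightarrow>
     (a1 < b1 \<and> b1 < a2 \<and> a2 < b2) \<or> (b1 < a1 \<and> a1 < b2 \<and> b2 < a2))"

definition endpoints :: "nat \<times> nat \<Rightarrow> nat set" where
  "endpoints e = {fst e, snd e}"

definition admissible :: "nat \<Rightarrow> (nat \<times> nat) set \<Rightarrow> nat \<times> nat \<Rightarrow> nat \<times> nat \<Rightarrow> nat set \<Rightarrow> bool" where
  "admissible n E e f S \<longleftrightarrow> S \<subseteq> {1..n} \<and> endpoints e \<subseteq> S \<and> endpoints f \<subseteq> S \<and> connected_on E S"

definition minimal_adm :: "nat \<Rightarrow> (nat \<times> nat) set \<Rightarrow> nat \<times> nat \<Rightarrow> nat \<times> nat \<Rightarrow> nat set \<Rightarrow> bool" where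
  "minimal_adm n E e f S \<longleftrightarrow> admissible n E e f S \<and> (\<forall>T. T \<subset> S \<longrightarrow> \<not> admissible n E e f T)"

definition crossing_closed_pair :: "nat \<Rightarrow> (nat \<times> nat) set \<Rightarrow> nat \<times> nat \<Rightarrow> nat \<times> nat \<Rightarrow> bool" where
  "crossing_closed_pair n E e f \<longleftrightarrow> (\<exists>!S. minimal_adm n E e f S)"

(* vertex set of J(e,f) (induced subgraph, so determined by its vertex set) *)
definition J :: "nat \<Rightarrow> (nat \<times> nat) set \<Rightarrow> nat \<times> nat \<Rightarrow> nat \<times> nat \<Rightarrow> nat set" where
  "J n E e f = (THE S. minimal_adm n E e f S)"

definition crossing_closed :: "nat \<Rightarrow> (nat \<times> nat) set \<Rightarrow> bool" where
  "crossing_closed n E \<longleftrightarrow>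
     (\<forall>e\<in>E. \<forall>f\<in>E. crossing e f \<longrightarrow> crossing_closed_pair n E e f)"

definition tightly_closed :: "nat \<Rightarrow> (nat \<times> nat) set \<Rightarrow> bool" where
  "tightly_closed n E \<longleftrightarrow> crossing_closed n E \<and>
     (\<forall>e\<in>E. \<forall>f\<in>E. crossing e f \<longrightarrow> J n E e f = endpoints e \<union> endpoints f)"

end

theory Submission
  imports Defs
begin

(* Deleting a vertex v that is not an endpoint of e or f leaves, by 2-connectivity, a connected
   induced subgraph containing e and f. It contains a minimal one, which by uniqueness is J(e,f);
   so J(e,f) avoids v, and only the four endpoints remain. *)

lemma finite_has_minimal_subset:
  assumes "finite T" and "P T"
  obtains U where "U \<subseteq> T" and "P U" and "\<And>W. W \<subset> U \<Longrightarrow> \<not> P W"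
proof -
  have "finite {U. U \<subseteq> T \<and> P U}"
    using assms(1) by simp
  then obtain U where U: "U \<subseteq> T" "P U"
    and min: "\<And>W. W \<subseteq> T \<Longrightarrow> P W \<Longrightarrow> W \<subseteq> U \<Longrightarrow> U = W"
    using finite_has_minimal2[of "{U. U \<subseteq> T \<and> P U}" T] assms(2) by auto
  have "\<not> P W" if "W \<subset> U" for W
    using min[of W] U(1) that by blast
  with U show thesis
    using that by blast
qed

lemma admissible_contains_minimal_adm:
  assumes "admissible n E e f T"
  obtains U where "U \<subseteq> T" and "minimal_adm n E e f U"
proof -
  have "finite T"
    using assms unfolding admissible_def by (meson finite_atLeastAtMost finite_subset)
  then obtain U where "U \<subseteq> T" and "admissible n E e f U"
    and "\<And>W. W \<subset> U \<Longrightarrow> \<not> admissible n E e f W"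
    using finite_has_minimal_subset assms by blast
  then show thesis
    using that unfolding minimal_adm_def by blast
qed

lemma crossing_closed_pair_minimal_adm_J:
  assumes "crossing_closed_pair n E e f"
  shows "minimal_adm n E e f (J n E e f)"
  using assms unfolding crossing_closed_pair_def J_def by (rule theI')

lemma crossing_closed_pair_minimal_adm_eq_J:
  assumes "crossing_closed_pair n E e f" and "minimal_adm n E e f S"
  shows "S = J n E e f"
  using assms unfolding crossing_closed_pair_def J_def by (simp add: the1_equality)

lemma crossing_closed_pair_J_subset_admissible:
  assumes "crossing_closed_pair n E e f" and "admissible n E e f T"
  shows "J n E e f \<subseteq> T"
proof -
  obtain U where "U \<subseteq> T" and "minimal_adm n E e f U"
    using assms(2) by (rule admissible_contains_minimal_adm)
  then show ?thesis
    using crossing_closed_pair_minimal_adm_eq_J[OF assms(1)] by blast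
qed

lemma graph_on_endpoints_subset:
  assumes "graph_on n E" and "e \<in> E"
  shows "endpoints e \<subseteq> {1..n}"
  using assms unfolding graph_on_def endpoints_def by (cases e) auto

lemma two_connected_admissible_delete_vertex:
  assumes "graph_on n E" and "two_connected n E" and "e \<in> E" and "f \<in> E"
    and "v \<in> {1..n}" and "v \<notin> endpoints e \<union> endpoints f"
  shows "admissible n E e f ({1..n} - {v})"
proof -
  have "connected_on E ({1..n} - {v})"
    using assms(2,5) unfolding two_connected_def by blast
  moreover have "endpoints e \<union> endpoints f \<subseteq> {1..n}"
    using graph_on_endpoints_subset[OF assms(1)] assms(3,4) by blast
  ultimately show ?thesis
    using assms(6) unfolding admissible_def by blast
qed

lemma two_connected_J_eq_endpoints:
  assumes "graph_on n E" and "two_connected n E" and "e \<in> E" and "f \<in> E"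
    and "crossing_closed_pair n E e f"
  shows "J n E e f = endpoints e \<union> endpoints f"
proof
  have adm_J: "admissible n E e f (J n E e f)"
    using crossing_closed_pair_minimal_adm_J[OF assms(5)] unfolding minimal_adm_def by blast
  then show "endpoints e \<union> endpoints f \<subseteq> J n E e f"
    unfolding admissible_def by blast
  show "J n E e f \<subseteq> endpoints e \<union> endpoints f"
  proof
    fix v assume v: "v \<in> J n E e f"
    then have "v \<in> {1..n}"
      using adm_J unfolding admissible_def by blast
    show "v \<in> endpoints e \<union> endpoints f"
    proof (rule ccontr)
      assume "v \<notin> endpoints e \<union> endpoints f"
      then have "J n E e f \<subseteq> {1..n} - {v}"
        using crossing_closed_pair_J_subset_admissible[OF assms(5)]
          two_connected_admissible_delete_vertex[OF assms(1-4) \<open>v \<in> {1..n}\<close>] by blast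
      with v show False
        by blast
    qed
  qed
qed

theorem proposition5p14:
  fixes n :: nat and E :: "(nat \<times> nat) set"
  assumes "graph_on n E"
    and "two_connected n E"
    and "crossing_closed n E"
  shows "tightly_closed n E"
  using assms two_connected_J_eq_endpoints
  unfolding tightly_closed_def crossing_closed_def by blast

end
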